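(* Let $T$ be a finite tree rooted at a fixed non-leaf vertex $r$ and let $k\geq 1$. For each $0\leq i\leq k-1$, let $I_i$ be the graph on $V(T)$ in which distinct $u,v$ are adjacent iff $f_i(u)\cap f_i(v)\neq\emptyset$, where $f_i(u)=[s(p^i(u)),\,t(p^{k-1-i}(u))]$. Then for every $0\leq i\leq k-1$, $I_i$ is a supergraph of $T^k$, i.e. $E(T^k)\subseteq E(I_i)$.
   Context: $T^k$ is the graph on $V(T)$ in which distinct $u,v$ are adjacent iff $d_T(u,v)\leq k$, where $d_T$ is the distance in $T$. For vertices $u,v$, $u\preceq v$ ($u$ is an ancestor of $v$) means that $u$ lies on the unique path in $T$ from $r$ to $v$. For $u\neq r$, $p(u)$ is the neighbour of $u$ on the path from $u$ to $r$, and $p(r)=r$; $p^0(u)=u$ and $p^i(u)=p(p^{i-1}(u))$ for $i\geq 1$. Let $l_1,\ldots,l_m$ be the leaves (degree-1 vertices) of $T$ in the order in which they appear in some depth-first traversal of $T$ starting from $r$; for a vertex $u$, $L(u)=\{i: u\preceq l_i\}$, $s(u)=\min L(u)$, $t(u)=\max L(u)$. (Each $f_i(u)$ is a closed interval with $s(p^i(u))\leq t(p^{k-1-i}(u))$.) *)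

theory Defs
  imports Main
begin

(* A finite (undirected, simple) graph is given by a vertex set V and a
   symmetric irreflexive adjacency relation E on V. *)

definition is_walk :: "'a set \<Rightarrow> ('a \<Rightarrow> 'a \<Rightarrow> bool) \<Rightarrow> 'a list \<Rightarrow> bool" where
  "is_walk V E xs \<longleftrightarrow> xs \<noteq> [] \<and> set xs \<subseteq> V \<and>
     (\<forall>j. Suc j < length xs \<longrightarrow> E (xs ! j) (xs ! Suc j))"

definition is_path :: "'a set \<Rightarrow> ('a \<Rightarrow> 'a \<Rightarrow> bool) \<Rightarrow> 'a list \<Rightarrow> bool" where
  "is_path V E xs \<longleftrightarrow> is_walk V E xs \<and> distinct xs"

definition is_tree :: "'a set \<Rightarrow> ('a \<Rightarrow> 'a \<Rightarrow> bool) \<Rightarrow> bool" where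
  "is_tree V E \<longleftrightarrow> finite V \<and> V \<noteq> {} \<and>
     (\<forall>u w. E u w \<longrightarrow> u \<in> V \<and> w \<in> V) \<and>
     (\<forall>u w. E u w \<longrightarrow> E w u) \<and> (\<forall>u. \<not> E u u) \<and>
     (\<forall>u\<in>V. \<forall>w\<in>V. \<exists>xs. is_walk V E xs \<and> hd xs = u \<and> last xs = w) \<and>
     \<comment> \<open>acyclic: no cycle of length at least 3\<close>
     (\<nexists>xs. is_path V E xs \<and> length xs \<ge> 3 \<and> E (last xs) (hd xs))"

definition is_leaf :: "'a set \<Rightarrow> ('a \<Rightarrow> 'a \<Rightarrow> bool) \<Rightarrow> 'a \<Rightarrow> bool" where
  "is_leaf V E u \<longleftrightarrow> u \<in> V \<and> card {w \<in> V. E u w} = 1"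

definition tdist :: "'a set \<Rightarrow> ('a \<Rightarrow> 'a \<Rightarrow> bool) \<Rightarrow> 'a \<Rightarrow> 'a \<Rightarrow> nat" where
  "tdist V E u v = (LEAST n. \<exists>xs. is_walk V E xs \<and> hd xs = u \<and> last xs = v \<and> length xs = Suc n)"

definition anc :: "'a set \<Rightarrow> ('a \<Rightarrow> 'a \<Rightarrow> bool) \<Rightarrow> 'a \<Rightarrow> 'a \<Rightarrow> 'a \<Rightarrow> bool" where
  "anc V E r u v \<longleftrightarrow> (\<exists>xs. is_path V E xs \<and> hd xs = r \<and> last xs = v \<and> u \<in> set xs)"

definition parent :: "'a set \<Rightarrow> ('a \<Rightarrow> 'a \<Rightarrow> bool) \<Rightarrow> 'a \<Rightarrow> 'a \<Rightarrow> 'a" where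
  "parent V E r u = (if u = r then r else (THE w. E u w \<and> anc V E r w u))"

definition is_dfs_order :: "'a set \<Rightarrow> ('a \<Rightarrow> 'a \<Rightarrow> bool) \<Rightarrow> 'a \<Rightarrow> 'a list \<Rightarrow> bool" where
  "is_dfs_order V E r xs \<longleftrightarrow> distinct xs \<and> set xs = V \<and> xs \<noteq> [] \<and> hd xs = r \<and>
     (\<forall>i. 0 < i \<and> i < length xs \<longrightarrow>
        (\<exists>j<i. xs ! j = parent V E r (xs ! i) \<and>
               (\<forall>j'. j < j' \<and> j' \<le> i \<longrightarrow> anc V E r (xs ! j) (xs ! j'))))"

(* leaves l_0, ..., l_{m-1} in order of the traversal (0-based indices) *)
definition leaves_seq :: "'a set \<Rightarrow> ('a \<Rightarrow> 'a \<Rightarrow> bool) \<Rightarrow> 'a list \<Rightarrow> 'a list" where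
  "leaves_seq V E xs = filter (is_leaf V E) xs"

definition Lset :: "'a set \<Rightarrow> ('a \<Rightarrow> 'a \<Rightarrow> bool) \<Rightarrow> 'a \<Rightarrow> 'a list \<Rightarrow> 'a \<Rightarrow> nat set" where
  "Lset V E r xs u = {i. i < length (leaves_seq V E xs) \<and> anc V E r u (leaves_seq V E xs ! i)}"

definition sL :: "'a set \<Rightarrow> ('a \<Rightarrow> 'a \<Rightarrow> bool) \<Rightarrow> 'a \<Rightarrow> 'a list \<Rightarrow> 'a \<Rightarrow> nat" where
  "sL V E r xs u = Min (Lset V E r xs u)"

definition tL :: "'a set \<Rightarrow> ('a \<Rightarrow> 'a \<Rightarrow> bool) \<Rightarrow> 'a \<Rightarrow> 'a list \<Rightarrow> 'a \<Rightarrow> nat" where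
  "tL V E r xs u = Max (Lset V E r xs u)"

definition f_int :: "'a set \<Rightarrow> ('a \<Rightarrow> 'a \<Rightarrow> bool) \<Rightarrow> 'a \<Rightarrow> 'a list \<Rightarrow> nat \<Rightarrow> nat \<Rightarrow> 'a \<Rightarrow> nat set" where
  "f_int V E r xs k i u =
     {sL V E r xs ((parent V E r ^^ i) u) .. tL V E r xs ((parent V E r ^^ (k - 1 - i)) u)}"

definition pow_adj :: "'a set \<Rightarrow> ('a \<Rightarrow> 'a \<Rightarrow> bool) \<Rightarrow> nat \<Rightarrow> 'a \<Rightarrow> 'a \<Rightarrow> bool" where
  "pow_adj V E k u v \<longleftrightarrow> u \<in> V \<and> v \<in> V \<and> u \<noteq> v \<and> tdist V E u v \<le> k"

definition I_adj :: "'a set \<Rightarrow> ('a \<Rightarrow> 'a \<Rightarrow> bool) \<Rightarrow> 'a \<Rightarrow> 'a list \<Rightarrow> nat \<Rightarrow> nat \<Rightarrow> 'a \<Rightarrow> 'a \<Rightarrow> bool" where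
  "I_adj V E r xs k i u v \<longleftrightarrow> u \<in> V \<and> v \<in> V \<and> u \<noteq> v \<and>
     f_int V E r xs k i u \<inter> f_int V E r xs k i v \<noteq> {}"

end

theory Submission
  imports Defs "HOL-Library.Sublist"
begin

text \<open>
  A shortest walk from \<open>u\<close> to \<open>v\<close> climbs to a common ancestor: \<open>p\<^sup>a(u) = p\<^sup>b(v)\<close> with
  \<open>a + b \<le> d(u,v) \<le> k\<close>. With \<open>j = k - 1 - i\<close> we cannot have both \<open>a > i\<close> and \<open>b > j\<close>,
  so \<open>p\<^sup>i(u)\<close> and \<open>p\<^sup>j(v)\<close> (and symmetrically \<open>p\<^sup>i(v)\<close> and \<open>p\<^sup>j(u)\<close>) are ancestors of a
  common vertex, hence of a common leaf \<open>l\<close>, whence \<open>s(p\<^sup>i(u)) \<le> l \<le> t(p\<^sup>j(v))\<close>.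
  Together with \<open>s(p\<^sup>i(w)) \<le> t(p\<^sup>j(w))\<close> this puts \<open>max (s(p\<^sup>i(u))) (s(p\<^sup>i(v)))\<close> into
  \<open>f\<^sub>i(u) \<inter> f\<^sub>i(v)\<close>.
\<close>

lemma is_walk_iff_successively:
  "is_walk V E xs \<longleftrightarrow> xs \<noteq> [] \<and> set xs \<subseteq> V \<and> successively E xs"
  by (simp add: is_walk_def successively_conv_nth)

lemma successively_shortcut_to_distinct:
  assumes "xs \<noteq> []" "successively E xs"
  shows "\<exists>ys. ys \<noteq> [] \<and> successively E ys \<and> distinct ys \<and>
           hd ys = hd xs \<and> last ys = last xs \<and> set ys \<subseteq> set xs"
  using assms
proof (induction "length xs" arbitrary: xs rule: less_induct)
  case less
  show ?case
  proof (cases "distinct xs")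
    case True
    then show ?thesis using less by blast
  next
    case False
    then obtain a b c y where xs: "xs = a @ [y] @ b @ [y] @ c"
      using not_distinct_decomp by blast
    define zs where "zs = a @ [y] @ c"
    have "successively E zs" using less(3) unfolding xs zs_def
      by (auto simp: successively_append_iff successively_Cons split: if_splits)
    moreover have "length zs < length xs" "zs \<noteq> []" using xs zs_def by simp_all
    ultimately obtain ys where "ys \<noteq> [] \<and> successively E ys \<and> distinct ys \<and>
        hd ys = hd zs \<and> last ys = last zs \<and> set ys \<subseteq> set zs"
      using less(1) by blast
    moreover have "hd zs = hd xs" "last zs = last xs" "set zs \<subseteq> set xs" using xs zs_def
      by (auto simp: hd_append last_append)
    ultimately show ?thesis by auto
  qed
qed

locale rooted_tree =
  fixes V :: "'a set" and E :: "'a \<Rightarrow> 'a \<Rightarrow> bool" and r :: 'a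
  assumes tree: "is_tree V E" and root_in_V: "r \<in> V"
begin

abbreviation p :: "'a \<Rightarrow> 'a" where "p \<equiv> parent V E r"

lemma edge_sym: "E x y \<Longrightarrow> E y x"
  using tree unfolding is_tree_def by blast

lemma edge_in_V: "E x y \<Longrightarrow> x \<in> V \<and> y \<in> V"
  using tree unfolding is_tree_def by blast

lemma edge_irrefl: "\<not> E x x"
  using tree unfolding is_tree_def by blast

lemma finite_V: "finite V"
  using tree unfolding is_tree_def by blast

lemma is_path_iff: "is_path V E P \<longleftrightarrow> P \<noteq> [] \<and> set P \<subseteq> V \<and> successively E P \<and> distinct P"
  by (auto simp: is_path_def is_walk_iff_successively)

lemma successively_set_subset_V: "successively E C \<Longrightarrow> length C \<ge> 2 \<Longrightarrow> set C \<subseteq> V"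
proof (induction C)
  case (Cons a C)
  then obtain b C' where C: "C = b # C'" by (cases C) auto
  then have ab: "a \<in> V" "b \<in> V" using Cons.prems edge_in_V by auto
  show ?case
  proof (cases "C' = []")
    case True
    then show ?thesis using C ab by simp
  next
    case False
    then have "set C \<subseteq> V" using Cons C by (cases C') (auto simp: successively_Cons)
    then show ?thesis using ab by simp
  qed
qed simp

lemma no_cycle:
  "distinct C \<Longrightarrow> successively E C \<Longrightarrow> length C \<ge> 3 \<Longrightarrow> E (last C) (hd C) \<Longrightarrow> False"
  using tree successively_set_subset_V[of C] unfolding is_tree_def is_path_iff by auto

lemma branching_paths_close_cycle:
  assumes A: "distinct (x # A)" "successively E (x # A)" "A \<noteq> []"
    and B: "distinct (x # B)" "successively E (x # B)" "B \<noteq> []"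
    and "hd A \<noteq> hd B" "last A = last B"
  shows False
proof -
  have "\<exists>y\<in>set B. y \<in> set A" using A(3) B(3) \<open>last A = last B\<close> by (metis last_in_set)
  then obtain D y R where B_split: "B = D @ y # R" "y \<in> set A" "\<forall>z\<in>set D. z \<notin> set A"
    using split_list_first_prop[of B "\<lambda>z. z \<in> set A"] by blast
  then obtain A1 A2 where A_split: "A = A1 @ y # A2" by (meson split_list)
  define C where "C = (x # A1) @ y # rev D"
  have "distinct C" using A(1) B(1) A_split B_split unfolding C_def by auto
  moreover have "successively E C"
  proof -
    have "successively E ((x # A1) @ [y])"
      using A(2) A_split successively_append_iff[of E "x # A1 @ [y]" A2] by simp
    then have "successively E (x # A1)" "E (last (x # A1)) y"
      using successively_append_iff[of E "x # A1" "[y]"] by simp_all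
    moreover have "successively E (D @ [y])" using B(2) B_split
      by (simp add: successively_append_iff successively_Cons)
    then have "successively (\<lambda>a b. E b a) (D @ [y])"
      using edge_sym by (rule successively_mono) blast
    then have "successively E (y # rev D)" using successively_rev[of E "D @ [y]"] by simp
    ultimately show ?thesis
      unfolding C_def using successively_append_iff[of E "x # A1" "y # rev D"] by simp
  qed
  moreover have "last C = hd B" using B_split unfolding C_def by (cases D) (simp_all add: last_rev)
  then have "E (last C) (hd C)" using B(2,3) edge_sym unfolding C_def by (cases B) auto
  moreover have "length C \<ge> 3"
  proof (cases D)
    case Nil
    then have "A1 \<noteq> []" using A_split B_split \<open>hd A \<noteq> hd B\<close> by auto
    then show ?thesis using Nil unfolding C_def by (cases A1) auto
  qed (simp add: C_def)
  ultimately show False using no_cycle by blast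
qed

lemma path_unique: "is_path V E P \<Longrightarrow> is_path V E Q \<Longrightarrow> hd P = hd Q \<Longrightarrow> last P = last Q \<Longrightarrow> P = Q"
  unfolding is_path_iff
proof (induction P arbitrary: Q)
  case (Cons x P)
  then obtain Q' where Q: "Q = x # Q'" by (cases Q) auto
  have x: "x \<notin> set P" "x \<notin> set Q'" "last (x # P) = last (x # Q')"
    using Cons.prems Q by auto
  then have Nil_iff: "P = [] \<longleftrightarrow> Q' = []" by (metis last_ConsL last_ConsR last_in_set)
  have "P = Q'" if "P \<noteq> []" "hd P = hd Q'"
    using Cons.prems Q that Nil_iff by (intro Cons.IH) (simp_all add: successively_Cons)
  then show ?case
    using Cons.prems Q x Nil_iff branching_paths_close_cycle[of x P Q'] by (cases "hd P = hd Q'") auto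
qed simp

lemma path_exists: "u \<in> V \<Longrightarrow> w \<in> V \<Longrightarrow> \<exists>P. is_path V E P \<and> hd P = u \<and> last P = w"
proof -
  assume "u \<in> V" "w \<in> V"
  then obtain xs where xs: "is_walk V E xs" "hd xs = u" "last xs = w"
    using tree unfolding is_tree_def by blast
  then obtain ys where "ys \<noteq> [] \<and> successively E ys \<and> distinct ys \<and>
      hd ys = u \<and> last ys = w \<and> set ys \<subseteq> set xs"
    using successively_shortcut_to_distinct[of xs E] unfolding is_walk_iff_successively by blast
  with xs(1) show ?thesis unfolding is_path_iff is_walk_iff_successively by blast
qed

definition root_path :: "'a \<Rightarrow> 'a list" where
  "root_path u = (THE P. is_path V E P \<and> hd P = r \<and> last P = u)"

lemma root_path: "u \<in> V \<Longrightarrow> is_path V E (root_path u) \<and> hd (root_path u) = r \<and> last (root_path u) = u"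
proof -
  assume "u \<in> V"
  then obtain P where P: "is_path V E P \<and> hd P = r \<and> last P = u"
    using path_exists root_in_V by blast
  show ?thesis unfolding root_path_def
    by (rule theI[of _ P]) (use P path_unique in auto)
qed

lemma root_path_eqI: "is_path V E P \<Longrightarrow> hd P = r \<Longrightarrow> last P = u \<Longrightarrow> root_path u = P"
  using root_path path_unique unfolding is_path_iff by (metis last_in_set subsetD)

lemma root_path_nonempty: "u \<in> V \<Longrightarrow> root_path u \<noteq> []"
  using root_path is_path_iff by blast

lemma root_path_root: "root_path r = [r]"
  by (rule root_path_eqI) (auto simp: is_path_iff root_in_V)

lemma root_path_prefix: "y \<in> V \<Longrightarrow> root_path y = A @ x # B \<Longrightarrow> root_path x = A @ [x]"
proof -
  assume y: "y \<in> V" and split: "root_path y = A @ x # B"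
  have "is_path V E (root_path y)" "hd (root_path y) = r" using root_path y by auto
  then have "is_path V E (A @ [x])" "hd (A @ [x]) = r" using split unfolding is_path_iff
    by (auto simp: successively_append_iff successively_Cons hd_append split: if_splits)
  then show ?thesis by (intro root_path_eqI) auto
qed

lemma root_path_snoc: "E y z \<Longrightarrow> z \<notin> set (root_path y) \<Longrightarrow> root_path z = root_path y @ [z]"
proof -
  assume e: "E y z" and z: "z \<notin> set (root_path y)"
  have yV: "y \<in> V" and zV: "z \<in> V" using edge_in_V e by auto
  have "is_path V E (root_path y @ [z])"
    using root_path[OF yV] z zV e root_path_nonempty[OF yV] unfolding is_path_iff
    by (auto simp: successively_append_iff)
  then show ?thesis using root_path[OF yV] root_path_nonempty[OF yV] by (intro root_path_eqI) auto
qed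

lemma anc_iff_prefix: "x \<in> V \<Longrightarrow> y \<in> V \<Longrightarrow> anc V E r x y \<longleftrightarrow> prefix (root_path x) (root_path y)"
proof
  assume xV: "x \<in> V" and yV: "y \<in> V" and "anc V E r x y"
  then have "x \<in> set (root_path y)" unfolding anc_def using root_path_eqI by metis
  then obtain A B where "root_path y = A @ x # B" by (meson split_list)
  then show "prefix (root_path x) (root_path y)" using root_path_prefix[OF yV] by (simp add: prefix_def)
next
  assume xV: "x \<in> V" and yV: "y \<in> V" and "prefix (root_path x) (root_path y)"
  moreover have "x \<in> set (root_path x)" using root_path[OF xV] root_path_nonempty[OF xV] by (metis last_in_set)
  ultimately show "anc V E r x y" unfolding anc_def using root_path[OF yV] set_mono_prefix by blast
qed

lemma anc_in_V: "anc V E r x y \<Longrightarrow> x \<in> V \<and> y \<in> V"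
  unfolding anc_def is_path_iff by (auto dest: last_in_set)

lemma anc_refl: "x \<in> V \<Longrightarrow> anc V E r x x"
  by (simp add: anc_iff_prefix)

lemma anc_trans: "anc V E r x y \<Longrightarrow> anc V E r y z \<Longrightarrow> anc V E r x z"
proof -
  assume xy: "anc V E r x y" and yz: "anc V E r y z"
  have V: "x \<in> V" "y \<in> V" "z \<in> V" using xy yz anc_in_V by auto
  show ?thesis using xy yz by (simp add: anc_iff_prefix V prefix_order.trans[of _ "root_path y"])
qed

lemma root_path_no_chord:
  assumes "u \<in> V" "root_path u = A @ [w, u]" "E u w'" "w' \<in> set (root_path u)"
  shows "w' = w"
proof (rule ccontr)
  assume "w' \<noteq> w"
  moreover have "w' \<noteq> u" using assms(3) edge_irrefl by blast
  ultimately obtain A1 A2 where A: "A = A1 @ w' # A2" using assms(2,4) by (auto dest: split_list)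
  define C where "C = w' # A2 @ [w, u]"
  have "root_path u = A1 @ C" using assms(2) A C_def by simp
  then have "distinct C" "successively E C"
    using root_path[OF assms(1)] unfolding is_path_iff by (auto simp: successively_append_iff)
  moreover have "length C \<ge> 3" "E (last C) (hd C)" unfolding C_def using assms(3) by simp_all
  ultimately show False using no_cycle by blast
qed

lemma root_path_parent:
  assumes "u \<in> V" "u \<noteq> r"
  shows "E u (p u) \<and> p u \<in> V \<and> root_path u = root_path (p u) @ [u]"
proof -
  have P: "is_path V E (root_path u)" "hd (root_path u) = r" "last (root_path u) = u"
    using root_path assms(1) by auto
  obtain A w where A: "root_path u = A @ [w, u]"
  proof -
    obtain B where B: "root_path u = B @ [u]"
      using P root_path_nonempty[OF assms(1)] by (metis append_butlast_last_id)
    moreover have "B \<noteq> []" using B P assms(2) by auto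
    then obtain A w where "B = A @ [w]" by (metis append_butlast_last_id)
    ultimately show ?thesis using that by simp
  qed
  have Ewu: "E w u" using P A unfolding is_path_iff by (simp add: successively_append_iff)
  then have wV: "w \<in> V" using edge_in_V by blast
  have "(THE w'. E u w' \<and> anc V E r w' u) = w"
  proof (rule the_equality)
    show "E u w \<and> anc V E r w u"
      using edge_sym[OF Ewu] P A unfolding anc_def by auto
  next
    fix w' assume "E u w' \<and> anc V E r w' u"
    then show "w' = w"
      using root_path_no_chord[OF assms(1) A] root_path_eqI unfolding anc_def by metis
  qed
  then have "p u = w" unfolding parent_def using assms(2) by simp
  then show ?thesis using edge_sym[OF Ewu] wV root_path_prefix[OF assms(1)] A by simp
qed

lemma parent_root: "p r = r"
  by (simp add: parent_def)

lemma parent_in_V: "u \<in> V \<Longrightarrow> p u \<in> V"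
  using root_path_parent[of u] by (cases "u = r") (auto simp: parent_root)

lemma funpow_parent_in_V: "u \<in> V \<Longrightarrow> (p ^^ i) u \<in> V"
  by (induction i) (auto simp: parent_in_V)

lemma anc_parent: "u \<in> V \<Longrightarrow> anc V E r (p u) u"
  using root_path_parent[of u] parent_in_V[of u]
  by (cases "u = r") (auto simp: parent_root anc_refl anc_iff_prefix)

lemma anc_funpow_parent: "u \<in> V \<Longrightarrow> anc V E r ((p ^^ i) u) u"
  by (induction i) (auto simp: anc_refl intro: anc_trans anc_parent funpow_parent_in_V)

lemma edge_parent_or_child: "E u x \<Longrightarrow> x = p u \<or> u = p x"
proof -
  assume e: "E u x"
  have uV: "u \<in> V" and xV: "x \<in> V" using edge_in_V e by auto
  show ?thesis
  proof (cases "x \<in> set (root_path u)")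
    case True
    then have "u \<noteq> r" using root_path_root edge_irrefl e by auto
    then have "root_path u = root_path (p u) @ [u]" using root_path_parent uV by blast
    moreover obtain A w where "root_path (p u) = A @ [w]"
      using root_path_nonempty[OF parent_in_V[OF uV]] by (metis append_butlast_last_id)
    ultimately have A: "root_path u = A @ [w, u]" and "w = p u"
      using root_path[OF parent_in_V[OF uV]] by auto
    then show ?thesis using root_path_no_chord[OF uV A e True] by simp
  next
    case False
    then have rx: "root_path x = root_path u @ [x]" using root_path_snoc e by blast
    then have "x \<noteq> r" using root_path_root root_path_nonempty[OF uV] by (cases "root_path u") auto
    then have "root_path (p x) = root_path u" using root_path_parent[OF xV] rx by simp
    then show ?thesis using root_path[OF uV] root_path[OF parent_in_V[OF xV]] by metis
  qed
qed

lemma neighbour_in_root_path_is_parent: "E y z \<Longrightarrow> z \<in> set (root_path y) \<Longrightarrow> z = p y"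
proof (rule ccontr)
  assume e: "E y z" and z: "z \<in> set (root_path y)" and "z \<noteq> p y"
  then have y: "y = p z" using edge_parent_or_child by blast
  then have "z \<noteq> r" using e edge_irrefl parent_root by auto
  then have "root_path z = root_path y @ [z]" using root_path_parent edge_in_V[OF e] y by auto
  moreover have "distinct (root_path z)" using root_path edge_in_V[OF e] unfolding is_path_iff by blast
  ultimately show False using z by simp
qed

lemma exists_leaf_below:
  assumes xV: "x \<in> V" and nontrivial: "V \<noteq> {r}"
  shows "\<exists>l. is_leaf V E l \<and> anc V E r x l"
proof -
  define S where "S = {y \<in> V. anc V E r x y}"
  have finS: "finite S" and xS: "x \<in> S" using finite_V xV anc_refl unfolding S_def by auto
  obtain y where yS: "y \<in> S" and y_max: "Max ((\<lambda>z. length (root_path z)) ` S) = length (root_path y)"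
    using obtains_MAX[OF finS] xS by blast
  have deepest: "z \<in> S \<Longrightarrow> length (root_path z) \<le> length (root_path y)" for z
    using finS y_max by (metis Max_ge finite_imageI image_eqI)
  have yV: "y \<in> V" using yS S_def by simp
  have neighbours: "E y z \<Longrightarrow> z = p y" for z
  proof (cases "z \<in> set (root_path y)")
    case False
    assume e: "E y z"
    then have "root_path z = root_path y @ [z]" using root_path_snoc False by blast
    moreover from this have "z \<in> S"
      using yS edge_in_V[OF e] anc_trans unfolding S_def by (auto simp: anc_iff_prefix)
    ultimately show ?thesis using deepest by fastforce
  qed (use neighbour_in_root_path_is_parent in blast)
  have "y \<noteq> r"
  proof
    assume "y = r"
    obtain v where v: "v \<in> V" "v \<noteq> r" using nontrivial root_in_V by blast
    then obtain P where P: "is_path V E P" "hd P = r" "last P = v" using path_exists root_in_V by blast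
    then obtain w P' where "P = r # w # P'" using v unfolding is_path_iff
      by (cases P; cases "tl P") auto
    then have "E r w" using P unfolding is_path_iff by simp
    then show False using neighbours \<open>y = r\<close> parent_root edge_irrefl by auto
  qed
  then have "{w \<in> V. E y w} = {p y}" using neighbours root_path_parent yV edge_in_V by blast
  then have "is_leaf V E y" unfolding is_leaf_def using yV by simp
  then show ?thesis using yS S_def by blast
qed

lemma walk_meets_at_ancestor:
  "w \<noteq> [] \<Longrightarrow> successively E w \<Longrightarrow> \<exists>a b. a + b < length w \<and> (p ^^ a) (hd w) = (p ^^ b) (last w)"
proof (induction w)
  case (Cons u w)
  show ?case
  proof (cases "w = []")
    case True
    then show ?thesis by (intro exI[of _ 0]) simp
  next
    case False
    have e: "E u (hd w)" using Cons.prems False by (cases w) auto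
    obtain a b where ab: "a + b < length w" "(p ^^ a) (hd w) = (p ^^ b) (last w)"
      using Cons False by (auto simp: successively_Cons)
    consider "hd w = p u" | "u = p (hd w)" using edge_parent_or_child[OF e] by blast
    then show ?thesis
    proof cases
      case 1
      have "(p ^^ Suc a) u = (p ^^ a) (p u)" by (simp only: funpow_Suc_right o_apply)
      then have "(p ^^ Suc a) u = (p ^^ b) (last w)" using 1 ab by simp
      then show ?thesis using ab False by (intro exI[of _ "Suc a"] exI[of _ b]) auto
    next
      case 2
      show ?thesis
      proof (cases a)
        case 0
        then have "u = (p ^^ Suc b) (last w)" using 2 ab by simp
        then show ?thesis using ab False 0 by (intro exI[of _ 0] exI[of _ "Suc b"]) auto
      next
        case (Suc c)
        have "(p ^^ Suc c) (hd w) = (p ^^ c) (p (hd w))" by (simp only: funpow_Suc_right o_apply)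
        then have "(p ^^ c) u = (p ^^ b) (last w)" using 2 ab Suc by simp
        then show ?thesis using ab False Suc by (intro exI[of _ c] exI[of _ b]) auto
      qed
    qed
  qed
qed simp

lemma pow_adj_meet_at_ancestor:
  assumes "pow_adj V E k u v"
  obtains a b where "a + b \<le> k" "(p ^^ a) u = (p ^^ b) v"
proof -
  have uV: "u \<in> V" and vV: "v \<in> V" and dist: "tdist V E u v \<le> k"
    using assms unfolding pow_adj_def by auto
  have shortest: "\<exists>n ws. is_walk V E ws \<and> hd ws = u \<and> last ws = v \<and> length ws = Suc n"
  proof -
    obtain ws where "is_walk V E ws" "hd ws = u" "last ws = v"
      using tree uV vV unfolding is_tree_def by blast
    moreover from this have "length ws = Suc (length ws - 1)"
      unfolding is_walk_iff_successively by (cases ws) auto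
    ultimately show ?thesis by blast
  qed
  then obtain ws where ws: "is_walk V E ws" "hd ws = u" "last ws = v" "length ws = Suc (tdist V E u v)"
    using LeastI_ex[OF shortest] unfolding tdist_def by blast
  then obtain a b where "a + b < Suc (tdist V E u v)" "(p ^^ a) u = (p ^^ b) v"
    using walk_meets_at_ancestor[of ws] unfolding is_walk_iff_successively by auto
  with dist show ?thesis using that[of a b] by simp
qed

lemma anc_funpow_parent_of_meet:
  assumes "v \<in> V" "(p ^^ a) u = (p ^^ b) v" "a \<le> m"
  shows "anc V E r ((p ^^ m) u) v"
proof -
  have "(p ^^ m) u = (p ^^ (m - a)) ((p ^^ a) u)"
    using assms(3) funpow_add[of "m - a" a p] by simp
  also have "\<dots> = (p ^^ (m - a + b)) v"
    using assms(2) funpow_add[of "m - a" b p] by simp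
  finally show ?thesis using anc_funpow_parent[OF assms(1)] by simp
qed

lemma sL_le_tL_of_common_descendant:
  assumes "V \<subseteq> set xs" "V \<noteq> {r}" "anc V E r x z" "anc V E r y z"
  shows "sL V E r xs x \<le> tL V E r xs y"
proof -
  obtain l where l: "is_leaf V E l" "anc V E r z l"
    using exists_leaf_below anc_in_V assms(2,3) by blast
  then have "l \<in> set (leaves_seq V E xs)"
    using assms(1) unfolding leaves_seq_def is_leaf_def by auto
  then obtain n where n: "n < length (leaves_seq V E xs)" "leaves_seq V E xs ! n = l"
    by (meson in_set_conv_nth)
  have "n \<in> Lset V E r xs x" "n \<in> Lset V E r xs y"
    unfolding Lset_def using n anc_trans l(2) assms(3,4) by auto
  moreover have "finite (Lset V E r xs w)" for w unfolding Lset_def by simp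
  ultimately show ?thesis unfolding sL_def tL_def by (meson Max_ge Min_le order_trans)
qed

lemma sL_funpow_le_tL_funpow:
  assumes "V \<subseteq> set xs" "V \<noteq> {r}" "x \<in> V" "y \<in> V"
    and "(p ^^ a) x = (p ^^ b) y" "a + b \<le> i + j + 1"
  shows "sL V E r xs ((p ^^ i) x) \<le> tL V E r xs ((p ^^ j) y)"
proof -
  consider "a \<le> i" | "b \<le> j" using assms(6) by linarith
  then show ?thesis
  proof cases
    case 1
    then show ?thesis using anc_funpow_parent_of_meet[OF assms(4,5)] anc_funpow_parent[OF assms(4)]
      by (intro sL_le_tL_of_common_descendant[OF assms(1,2)])
  next
    case 2
    then show ?thesis using anc_funpow_parent_of_meet[OF assms(3) assms(5)[symmetric]]
        anc_funpow_parent[OF assms(3)]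
      by (intro sL_le_tL_of_common_descendant[OF assms(1,2)])
  qed
qed

lemma pow_adj_imp_I_adj:
  assumes "V \<subseteq> set xs" "i < k" "pow_adj V E k u v"
  shows "I_adj V E r xs k i u v"
proof -
  have uV: "u \<in> V" and vV: "v \<in> V" and "u \<noteq> v"
    using assms(3) unfolding pow_adj_def by auto
  then have nontrivial: "V \<noteq> {r}" by blast
  define j where "j = k - 1 - i"
  then have k: "k = i + j + 1" using assms(2) by simp
  obtain a b where ab: "a + b \<le> k" "(p ^^ a) u = (p ^^ b) v"
    using pow_adj_meet_at_ancestor[OF assms(3)] by blast
  note bound = sL_funpow_le_tL_funpow[OF assms(1) nontrivial, where i = i and j = j]
  have "max (sL V E r xs ((p ^^ i) u)) (sL V E r xs ((p ^^ i) v))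
          \<in> f_int V E r xs k i u \<inter> f_int V E r xs k i v"
    unfolding f_int_def j_def[symmetric] using ab k
      bound[OF uV uV, of 0 0] bound[OF vV vV, of 0 0] bound[OF uV vV ab(2)] bound[OF vV uV ab(2)[symmetric]]
    by auto
  then show ?thesis unfolding I_adj_def using uV vV \<open>u \<noteq> v\<close> by blast
qed

end

theorem lemma7:
  fixes V :: "'a set" and E :: "'a \<Rightarrow> 'a \<Rightarrow> bool" and r :: 'a
    and k :: nat and xs :: "'a list"
  assumes "is_tree V E" and "r \<in> V" and "\<not> is_leaf V E r" and "k \<ge> 1"
    and "is_dfs_order V E r xs"
  shows "\<forall>i<k. \<forall>u v. pow_adj V E k u v \<longrightarrow> I_adj V E r xs k i u v"
proof -
  interpret rooted_tree V E r using assms(1,2) by unfold_locales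
  have "V \<subseteq> set xs" using assms(5) unfolding is_dfs_order_def by blast
  then show ?thesis using pow_adj_imp_I_adj by blast
qed

end
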